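(* In the setting described in the context, let $\langle s_m, s_{m+1},\ldots,s_{m+L}\rangle$ be a state subsequence, each state constituting one generation $G_1,\ldots,G_L$ of reproducing entities, where (reproduction being without epigenetic development) the size $|G_i|$ of a generation is obtained by enumerating the reproduction instances $(p,c)$ with $p\in E_s$, $c\in E_{s+1}$, $(p,c)\in C$, $(p,c)\in\Delta$ and no $e''\in E_s$ with $(e'',c)\in R$. Given the sets of entities in each state, the worst-case number of steps (RAM model) to observe fecundity, i.e. to compute these generation sizes and decide whether for every $i<L$ there is $j>i$ with $|G_j|\ge|G_i|$, is $O\!\left(L2^{2n}\max\{t_c,\ t_\Delta,\ t_{\delta_{mut}},\ L/2^{2n}\}\right)$.
   Context: A run is a sequence of states, each a finite multiset of atomic elements of size $O(n)$. For each state $s$ an observer has fixed a finite set $E_s$ of entities, each a sub-multiset of $s$, tagged so that distinct entities are distinguishable (entities of different states are distinct objects); hence $|E_s|\le 2^n$. Let $E_T$ be the disjoint union of all $E_s$. The observer fixes: a recognition relation $R\subseteq E_T\times E_T$, a partial injective function with $(e,e')\in R$ only if $e\in E_s$, $e'\in E_{s+1}$ for some state $s$ ($s+1$ denoting the next state); a causal relation $C\subseteq E_T\times E_T$ with $(e,e')\in C$ only if $e\in E_s$, $e'\in E_{s+1}$; and a relation $\Delta\subseteq E_T\times E_T$ such that $(e,e')\in\Delta$ implies $e$ lies in an earlier state than $e'$ and $(e,e')\notin R$. Deciding membership of a given pair in $C$, $\Delta$, $R$ takes at most $t_c$, $t_\Delta$, $t_{\delta_{mut}}$ steps respectively. *)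

theory Defs
  imports Complex_Main
begin

text \<open>
  Entities are elements of an abstract type 'e; E s is the (duplicate-free) list
  enumerating the entity set E_s given to the observer; st e is the state an entity
  lies in.  The relations R, C, Delta are membership oracles whose queries cost
  tR, tC, tD steps respectively (tR plays the role of t_delta_mut).
  Algorithms are written with explicit RAM-step accounting: each function returns
  a pair (result, number of steps).  Every oracle query is charged its full cost,
  every loop iteration / comparison / increment is charged one unit.
\<close>

definition repro_instance ::
  "(nat \<Rightarrow> 'e list) \<Rightarrow> ('e \<Rightarrow> 'e \<Rightarrow> bool) \<Rightarrow> ('e \<Rightarrow> 'e \<Rightarrow> bool) \<Rightarrow> ('e \<Rightarrow> 'e \<Rightarrow> bool)
    \<Rightarrow> nat \<Rightarrow> 'e \<Rightarrow> 'e \<Rightarrow> bool" where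
  "repro_instance E R C D s p c \<longleftrightarrow>
     p \<in> set (E s) \<and> c \<in> set (E (Suc s)) \<and> C p c \<and> D p c \<and>
     \<not> (\<exists>e''\<in>set (E s). R e'' c)"

text \<open>Size of generation G_i (i = 1..L) of the subsequence s_m, ..., s_(m+L):
  reproduction instances from state m+i-1 to state m+i.\<close>
definition gen_size ::
  "(nat \<Rightarrow> 'e list) \<Rightarrow> ('e \<Rightarrow> 'e \<Rightarrow> bool) \<Rightarrow> ('e \<Rightarrow> 'e \<Rightarrow> bool) \<Rightarrow> ('e \<Rightarrow> 'e \<Rightarrow> bool)
    \<Rightarrow> nat \<Rightarrow> nat \<Rightarrow> nat" where
  "gen_size E R C D m i = card {(p, c). repro_instance E R C D (m + i - 1) p c}"

definition fecund :: "(nat \<Rightarrow> nat) \<Rightarrow> nat \<Rightarrow> bool" where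
  "fecund g L \<longleftrightarrow> (\<forall>i. 1 \<le> i \<and> i < L \<longrightarrow> (\<exists>j. i < j \<and> j \<le> L \<and> g j \<ge> g i))"

definition recog_scan :: "('e \<Rightarrow> 'e \<Rightarrow> bool) \<Rightarrow> nat \<Rightarrow> 'e list \<Rightarrow> 'e \<Rightarrow> bool \<times> nat" where
  "recog_scan R tR ps c =
     fold (\<lambda>e (b, k). (b \<or> R e c, k + tR + 1)) ps (False, 1)"

definition recog_flags ::
  "('e \<Rightarrow> 'e \<Rightarrow> bool) \<Rightarrow> nat \<Rightarrow> 'e list \<Rightarrow> 'e list \<Rightarrow> ('e \<times> bool) list \<times> nat" where
  "recog_flags R tR ps cs =
     fold (\<lambda>c (fl, k). let (b, k') = recog_scan R tR ps c in (fl @ [(c, b)], k + k' + 1))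
       cs ([], 1)"

definition count_gen ::
  "('e \<Rightarrow> 'e \<Rightarrow> bool) \<Rightarrow> ('e \<Rightarrow> 'e \<Rightarrow> bool) \<Rightarrow> ('e \<Rightarrow> 'e \<Rightarrow> bool) \<Rightarrow> nat \<Rightarrow> nat \<Rightarrow> nat
    \<Rightarrow> 'e list \<Rightarrow> 'e list \<Rightarrow> nat \<times> nat" where
  "count_gen R C D tR tC tD ps cs =
     (let (fl, k0) = recog_flags R tR ps cs in
      fold (\<lambda>p (n, k).
              fold (\<lambda>(c, f) (n', k'').
                      (if C p c \<and> D p c \<and> \<not> f then n' + 1 else n', k'' + tC + tD + 2))
                fl (n, k + 1))
        ps (0, k0 + 1))"

definition gen_sizes ::
  "(nat \<Rightarrow> 'e list) \<Rightarrow> ('e \<Rightarrow> 'e \<Rightarrow> bool) \<Rightarrow> ('e \<Rightarrow> 'e \<Rightarrow> bool) \<Rightarrow> ('e \<Rightarrow> 'e \<Rightarrow> bool)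
    \<Rightarrow> nat \<Rightarrow> nat \<Rightarrow> nat \<Rightarrow> nat \<Rightarrow> nat \<Rightarrow> nat list \<times> nat" where
  "gen_sizes E R C D tR tC tD m L =
     fold (\<lambda>i (gs, k). let (g, k') = count_gen R C D tR tC tD (E (m + i - 1)) (E (m + i))
                        in (gs @ [g], k + k' + 1))
       [1..<L + 1] ([], 1)"

text \<open>Naive double-loop fecundity check on the list gs (gs ! (i-1) = |G_i|).\<close>
definition fecund_check :: "nat list \<Rightarrow> bool \<times> nat" where
  "fecund_check gs =
     (let L = length gs in
      fold (\<lambda>i (b, k).
              let (ex, k') = fold (\<lambda>j (e, k''). (e \<or> gs ! (j - 1) \<ge> gs ! (i - 1), k'' + 1))
                               [i + 1..<L + 1] (False, 1)
              in (b \<and> ex, k + k' + 1))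
        [1..<L] (True, 1))"

definition observe_fecundity ::
  "(nat \<Rightarrow> 'e list) \<Rightarrow> ('e \<Rightarrow> 'e \<Rightarrow> bool) \<Rightarrow> ('e \<Rightarrow> 'e \<Rightarrow> bool) \<Rightarrow> ('e \<Rightarrow> 'e \<Rightarrow> bool)
    \<Rightarrow> nat \<Rightarrow> nat \<Rightarrow> nat \<Rightarrow> nat \<Rightarrow> nat \<Rightarrow> (nat list \<times> bool) \<times> nat" where
  "observe_fecundity E R C D tR tC tD m L =
     (let (gs, k1) = gen_sizes E R C D tR tC tD m L;
          (b, k2) = fecund_check gs
      in ((gs, b), k1 + k2))"

end

theory Submission
  imports Defs
begin

text \<open>Every loop of the observer's algorithm has a closed form for both its result and its
  step count, because the cost of a loop iteration never depends on the data.  Counting one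
  generation precomputes, for each of the at most 2^n children, whether some parent recognises it
  (2^n queries of R each), and then spends one C- and one D-query per parent-child pair; so a
  generation costs O(2^(2n) (t_c + t_Delta + t_delta_mut)).  The naive fecundity check compares
  O(L^2) pairs of generation sizes, and L^2 = L 2^(2n) (L / 2^(2n)).\<close>

lemma recog_scan_eq:
  "recog_scan R tR ps c = ((\<exists>e\<in>set ps. R e c), 1 + length ps * (tR + 1))"
proof -
  have "fold (\<lambda>e (b, k). (b \<or> R e c, k + tR + 1)) ps (b, k) =
      (b \<or> (\<exists>e\<in>set ps. R e c), k + length ps * (tR + 1))" for b k
    by (induction ps arbitrary: b k) auto
  then show ?thesis
    unfolding recog_scan_def by simp
qed

lemma recog_flags_eq:
  "recog_flags R tR ps cs =
    (map (\<lambda>c. (c, \<exists>e\<in>set ps. R e c)) cs, 1 + length cs * (2 + length ps * (tR + 1)))"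
proof -
  have "fold (\<lambda>c (fl, k). let (b, k') = recog_scan R tR ps c in (fl @ [(c, b)], k + k' + 1))
        cs (fl, k) =
      (fl @ map (\<lambda>c. (c, \<exists>e\<in>set ps. R e c)) cs, k + length cs * (2 + length ps * (tR + 1)))" for fl k
    by (induction cs arbitrary: fl k) (auto simp: recog_scan_eq)
  then show ?thesis
    unfolding recog_flags_def by simp
qed

lemma count_gen_eq:
  "count_gen R C D tR tC tD ps cs =
    (\<Sum>p\<leftarrow>ps. length (filter (\<lambda>c. C p c \<and> D p c \<and> \<not> (\<exists>e\<in>set ps. R e c)) cs),
     2 + length cs * (2 + length ps * (tR + 1)) + length ps * (1 + length cs * (tC + tD + 2)))"
proof -
  define inner :: "'a \<Rightarrow> ('a \<times> bool) list \<Rightarrow> nat \<times> nat \<Rightarrow> nat \<times> nat"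
    where "inner p =
      fold (\<lambda>(c, f) (n', k''). (if C p c \<and> D p c \<and> \<not> f then n' + 1 else n', k'' + tC + tD + 2))"
    for p
  have inner_eq: "inner p fl (n, k) =
      (n + length (filter (\<lambda>(c, f). C p c \<and> D p c \<and> \<not> f) fl), k + length fl * (tC + tD + 2))" for p fl n k
    unfolding inner_def by (induction fl arbitrary: n k) (auto split: if_split_asm)
  have outer_eq: "fold (\<lambda>p (n, k). inner p fl (n, k + 1)) ps (n, k) =
      (n + (\<Sum>p\<leftarrow>ps. length (filter (\<lambda>(c, f). C p c \<and> D p c \<and> \<not> f) fl)),
       k + length ps * (1 + length fl * (tC + tD + 2)))" for fl n k
    by (induction ps arbitrary: n k) (simp_all add: inner_eq algebra_simps)
  show ?thesis
    unfolding count_gen_def recog_flags_eq Let_def prod.case inner_def[symmetric] outer_eq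
    by (simp add: filter_map o_def)
qed

lemma gen_sizes_eq:
  "gen_sizes E R C D tR tC tD m L =
    (map (\<lambda>i. fst (count_gen R C D tR tC tD (E (m + i - 1)) (E (m + i)))) [1..<L + 1],
     1 + (\<Sum>i\<leftarrow>[1..<L + 1]. snd (count_gen R C D tR tC tD (E (m + i - 1)) (E (m + i))) + 1))"
proof -
  have "fold (\<lambda>i (gs, k). let (g, k') = h i in (gs @ [g], k + k' + 1)) is (gs, k) =
      (gs @ map (\<lambda>i. fst (h i)) is, k + (\<Sum>i\<leftarrow>is. snd (h i) + 1))"
    for h :: "nat \<Rightarrow> nat \<times> nat" and "is" gs k
    by (induction "is" arbitrary: gs k) (auto simp: case_prod_beta Let_def algebra_simps)
  then show ?thesis
    unfolding gen_sizes_def by simp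
qed

lemma fecund_check_eq:
  "fecund_check gs =
    ((\<forall>i\<in>{1..<length gs}. \<exists>j\<in>{i<..length gs}. gs ! (i - 1) \<le> gs ! (j - 1)),
     1 + (\<Sum>i\<leftarrow>[1..<length gs]. 2 + (length gs - i)))"
proof -
  have inner: "fold (\<lambda>j (e, k''). (e \<or> gs ! (j - 1) \<ge> gs ! (i - 1), k'' + 1)) js (e, k) =
      (e \<or> (\<exists>j\<in>set js. gs ! (i - 1) \<le> gs ! (j - 1)), k + length js)" for i js e k
    by (induction js arbitrary: e k) auto
  have outer: "fold (\<lambda>i (b, k). let (ex, k') = g i in (b \<and> ex, k + k' + 1)) is (b, k) =
      (b \<and> (\<forall>i\<in>set is. fst (g i)), k + (\<Sum>i\<leftarrow>is. snd (g i) + 1))"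
    for g :: "nat \<Rightarrow> bool \<times> nat" and "is" b k
    by (induction "is" arbitrary: b k) (auto simp: case_prod_beta Let_def algebra_simps)
  show ?thesis
    unfolding fecund_check_def Let_def[of "length gs"] outer inner
    by (simp add: greaterThanAtMost_upt del: upt_Suc)
qed

lemma count_gen_card:
  assumes "distinct ps" "distinct cs"
  shows "fst (count_gen R C D tR tC tD ps cs) =
    card {(p, c). p \<in> set ps \<and> c \<in> set cs \<and> C p c \<and> D p c \<and> \<not> (\<exists>e\<in>set ps. R e c)}"
proof -
  have "{(p, c). p \<in> set ps \<and> c \<in> set cs \<and> C p c \<and> D p c \<and> \<not> (\<exists>e\<in>set ps. R e c)} =
      (SIGMA p:set ps. set (filter (\<lambda>c. C p c \<and> D p c \<and> \<not> (\<exists>e\<in>set ps. R e c)) cs))"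
    by auto
  then show ?thesis
    using assms by (simp add: count_gen_eq sum_list_distinct_conv_sum_set distinct_card[symmetric])
qed

lemma fst_gen_sizes:
  assumes "\<And>s. distinct (E s)"
  shows "fst (gen_sizes E R C D tR tC tD m L) = map (gen_size E R C D m) [1..<L + 1]"
  unfolding gen_sizes_eq fst_conv
proof (rule map_cong)
  fix i assume "i \<in> set [1..<L + 1]"
  then have "m + i = Suc (m + i - 1)" by (simp del: upt_Suc)
  then show "fst (count_gen R C D tR tC tD (E (m + i - 1)) (E (m + i))) = gen_size E R C D m i"
    using count_gen_card[OF assms assms] by (simp add: gen_size_def repro_instance_def)
qed simp

lemma fst_fecund_check: "fst (fecund_check (map g [1..<L + 1])) = fecund g L"
proof -
  have nth: "map g [1..<L + 1] ! (i - 1) = g i" if "1 \<le> i" "i \<le> L" for i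
    using that by (simp del: upt_Suc)
  have "(\<exists>j\<in>{i<..L}. map g [1..<L + 1] ! (i - 1) \<le> map g [1..<L + 1] ! (j - 1)) =
      (\<exists>j. i < j \<and> j \<le> L \<and> g i \<le> g j)" if "i \<in> {1..<L}" for i
    using that nth by auto
  then show ?thesis
    unfolding fecund_check_eq fecund_def by (simp add: Ball_def del: upt_Suc)
qed

lemma count_gen_steps_le:
  assumes "length ps \<le> N" "length cs \<le> N"
  shows "snd (count_gen R C D tR tC tD ps cs) \<le> 2 + 3 * N + N * N * (tR + tC + tD + 3)"
proof -
  let ?a = "length ps" and ?b = "length cs"
  have "snd (count_gen R C D tR tC tD ps cs) = 2 + 2 * ?b + ?a + ?a * ?b * (tR + tC + tD + 3)"
    by (simp add: count_gen_eq algebra_simps)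
  moreover have "?a * ?b * (tR + tC + tD + 3) \<le> N * N * (tR + tC + tD + 3)"
    using assms by (intro mult_le_mono mult_le_mono1) auto
  ultimately show ?thesis
    using assms by linarith
qed

lemma gen_sizes_steps_le:
  assumes "\<And>s. length (E s) \<le> N"
  shows "snd (gen_sizes E R C D tR tC tD m L) \<le> 1 + L * (3 + 3 * N + N * N * (tR + tC + tD + 3))"
proof -
  have "(\<Sum>i\<leftarrow>[1..<L + 1]. snd (count_gen R C D tR tC tD (E (m + i - 1)) (E (m + i))) + 1)
      \<le> (\<Sum>i\<leftarrow>[1..<L + 1]. 2 + 3 * N + N * N * (tR + tC + tD + 3) + 1)"
    by (intro sum_list_mono add_right_mono count_gen_steps_le assms)
  then show ?thesis
    by (simp add: gen_sizes_eq sum_list_triv algebra_simps del: upt_Suc)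
qed

lemma fecund_check_steps_le: "snd (fecund_check gs) \<le> 1 + length gs * length gs"
proof -
  let ?L = "length gs"
  have "(\<Sum>i\<leftarrow>[1..<?L]. 2 + (?L - i)) \<le> (\<Sum>i\<leftarrow>[1..<?L]. ?L + 1)"
    by (intro sum_list_mono) auto
  also have "\<dots> = (?L - 1) * (?L + 1)"
    by (simp add: sum_list_triv)
  also have "\<dots> \<le> ?L * ?L"
    by (cases ?L) auto
  finally show ?thesis
    by (simp add: fecund_check_eq)
qed

lemma observe_fecundity_eq:
  "observe_fecundity E R C D tR tC tD m L =
    (let (gs, k) = gen_sizes E R C D tR tC tD m L
     in ((gs, fst (fecund_check gs)), k + snd (fecund_check gs)))"
  unfolding observe_fecundity_def by (simp add: case_prod_beta)

lemma observe_fecundity_steps_le: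
  assumes "\<And>s. length (E s) \<le> N"
  shows "snd (observe_fecundity E R C D tR tC tD m L)
    \<le> 2 + L * (3 + 3 * N + N * N * (tR + tC + tD + 3)) + L * L"
proof -
  obtain gs k where gen: "gen_sizes E R C D tR tC tD m L = (gs, k)"
    by fastforce
  then have "length gs = L"
    by (auto simp: gen_sizes_eq simp del: upt_Suc)
  then show ?thesis
    using gen_sizes_steps_le[of E N, OF assms, of R C D tR tC tD m L] fecund_check_steps_le[of gs]
    by (simp add: observe_fecundity_eq gen)
qed

lemma fst_observe_fecundity:
  assumes "\<And>s. distinct (E s)"
  shows "fst (observe_fecundity E R C D tR tC tD m L) =
    (map (gen_size E R C D m) [1..<L + 1], fecund (gen_size E R C D m) L)"
  using fst_fecund_check[of "gen_size E R C D m" L]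
  by (simp add: observe_fecundity_eq case_prod_beta fst_gen_sizes[OF assms])

lemma steps_polynomial_le:
  fixes L N M T :: real
  assumes "1 \<le> L" "1 \<le> N" "1 \<le> M" "T \<le> 3 * M" "L \<le> N * N * M"
  shows "2 + L * (3 + 3 * N + N * N * (T + 3)) + L * L \<le> 15 * (L * (N * N) * M)"
proof -
  have NM: "1 \<le> N * M"
    using assms(2,3) by (rule mult_ge1_I)
  have NNM: "1 \<le> N * (N * M)"
    using assms(2) NM by (rule mult_ge1_I)
  have "1 \<le> L * (N * (N * M))"
    using assms(1) NNM by (rule mult_ge1_I)
  moreover have "L \<le> L * (N * (N * M))"
    using assms(1) NNM by simp
  moreover have "N \<le> N * (N * M)"
    using assms(2) NM by simp
  then have "L * N \<le> L * (N * (N * M))"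
    using assms(1) by (intro mult_left_mono) auto
  moreover have "L * (N * N) * (T + 3) \<le> L * (N * N) * (6 * M)"
    using assms by (intro mult_left_mono) auto
  moreover have "L * L \<le> L * (N * N * M)"
    using assms by (intro mult_left_mono) auto
  ultimately show ?thesis
    by (simp add: algebra_simps)
qed

lemma snd_observe_fecundity_le:
  assumes "\<And>s. length (E s) \<le> 2 ^ n" "1 \<le> tC" "1 \<le> tD" "1 \<le> tR" "1 \<le> L"
  shows "real (snd (observe_fecundity E R C D tR tC tD m L))
    \<le> 15 * real L * 2 ^ (2 * n) * Max {real tC, real tD, real tR, real L / 2 ^ (2 * n)}"
proof -
  define N :: real where "N = 2 ^ n"
  define M where "M = Max {real tC, real tD, real tR, real L / 2 ^ (2 * n)}"
  have pow: "(2::real) ^ (2 * n) = N * N"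
    unfolding N_def by (simp add: mult.commute[of 2 n] power_mult power2_eq_square)
  have M: "real tC \<le> M" "real tD \<le> M" "real tR \<le> M" "real L / (N * N) \<le> M"
    unfolding M_def pow by auto
  have N: "1 \<le> N"
    by (simp add: N_def)
  then have LM: "real L \<le> N * N * M"
    using M(4) by (simp add: pos_divide_le_eq mult.commute)
  have "real (snd (observe_fecundity E R C D tR tC tD m L))
      \<le> 2 + real L * (3 + 3 * N + N * N * (real (tR + tC + tD) + 3)) + real L * real L"
    using of_nat_mono[where 'a = real,
        OF observe_fecundity_steps_le[of E "2 ^ n" R C D tR tC tD m L, OF assms(1)]]
    unfolding N_def by simp
  also have "\<dots> \<le> 15 * (real L * (N * N) * M)"
    using assms N M LM by (intro steps_polynomial_le) auto
  finally show ?thesis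
    by (simp add: pow M_def mult.assoc)
qed

theorem theorem6:
  "\<exists>K::real. K > 0 \<and>
    (\<forall>(E :: nat \<Rightarrow> 'e list) (st :: 'e \<Rightarrow> nat) R C D (n::nat) (tR::nat) tC tD (m::nat) (L::nat).
      (\<forall>s. distinct (E s) \<and> length (E s) \<le> 2 ^ n \<and> (\<forall>e\<in>set (E s). st e = s)) \<and>
      (\<forall>e e'. R e e' \<longrightarrow> e \<in> set (E (st e)) \<and> e' \<in> set (E (Suc (st e))) \<and> st e' = Suc (st e)) \<and>
      (\<forall>e e1 e2. R e e1 \<and> R e e2 \<longrightarrow> e1 = e2) \<and>
      (\<forall>e1 e2 e. R e1 e \<and> R e2 e \<longrightarrow> e1 = e2) \<and>
      (\<forall>e e'. C e e' \<longrightarrow> e \<in> set (E (st e)) \<and> e' \<in> set (E (Suc (st e))) \<and> st e' = Suc (st e)) \<and>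
      (\<forall>e e'. D e e' \<longrightarrow> e \<in> set (E (st e)) \<and> e' \<in> set (E (st e')) \<and> st e < st e' \<and> \<not> R e e') \<and>
      1 \<le> tC \<and> 1 \<le> tD \<and> 1 \<le> tR \<and> 1 \<le> L
      \<longrightarrow>
      (let ((gs, b), steps) = observe_fecundity E R C D tR tC tD m L in
         gs = map (gen_size E R C D m) [1..<L + 1] \<and>
         b = fecund (gen_size E R C D m) L \<and>
         real steps \<le> K * real L * 2 ^ (2 * n) *
           Max {real tC, real tD, real tR, real L / 2 ^ (2 * n)}))"
proof (intro exI[of _ 15] conjI allI impI, goal_cases)
  case 1
  show ?case by simp
next
  case (2 E st R C D n tR tC tD m L)
  then have "\<And>s. distinct (E s)" and "\<And>s. length (E s) \<le> 2 ^ n"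
    and "1 \<le> tC" "1 \<le> tD" "1 \<le> tR" "1 \<le> L"
    by auto
  then show ?case
    using fst_observe_fecundity[of E R C D tR tC tD m L]
      snd_observe_fecundity_le[of E n tC tD tR L R C D m]
    by (simp add: case_prod_beta)
qed

end
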